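(* For all complex $q$ with $|q|<1$, $$F^{\rm ed}_{\rm ou}(-q)=-\frac{(-q^2;q^2)_\infty}{2}\left(2-\frac{1}{(-q;q)_\infty}-\frac{2}{(q;q)_\infty}\sum_{n\in\mathbb Z}\frac{(-1)^n q^{\frac{3n(n+1)}{2}}}{1+q^n}\right).$$
   Context: For $n\in\mathbb N_0\cup\{\infty\}$, $(a;q)_n:=\prod_{j=0}^{n-1}(1-aq^j)$. Define $$F^{\rm ed}_{\rm ou}(q):=\sum_{n=0}^\infty \frac{q^{2n+1}(-q^{2n+2};q^2)_\infty}{(q;q^2)_{n+1}},$$ the generating function for partitions into at least one odd part, with odd parts unrestricted in multiplicity, and even parts distinct and all larger than every odd part; $F^{\rm ed}_{\rm ou}(-q)$ denotes this function evaluated at $-q$. *)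

theory Defs
  imports "HOL-Analysis.Analysis"
begin

definition qpoch :: "complex \<Rightarrow> complex \<Rightarrow> nat \<Rightarrow> complex" where
  "qpoch a q n = (\<Prod>j<n. 1 - a * q ^ j)"

definition qpoch_inf :: "complex \<Rightarrow> complex \<Rightarrow> complex" where
  "qpoch_inf a q = (\<Prod>j. 1 - a * q ^ j)"

definition F_ed_ou :: "complex \<Rightarrow> complex" where
  "F_ed_ou q = (\<Sum>n. q ^ (2*n+1) * qpoch_inf (- (q ^ (2*n+2))) (q^2) / qpoch q (q^2) (n+1))"

end

(*
  Write (a)_n = (a;q)_n. Replacing q by -q turns the n-th summand of F(-q) into
  -(-q^2;q^2)_inf q^(2n+1) / (-q)_(2n+1), so F(-q) is -(-q^2;q^2)_inf times the odd part of
  sum_m q^m/(-q)_m. That series telescopes to 2 - 1/(-q)_inf, and its alternating version is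
  Y = sum_m (-q)^m/(-q)_m.

  The series X(z) = sum_n q^(n^2) z^n / ((-q)_n (-zq)_n) and Y(z) = sum_m (-zq)^m/(-q)_m satisfy
  first-order q-difference equations which give X(zq) + Y(zq) - 2 = -(1 + zq)(X(z) + Y(z) - 2).
  Since X(q^k) and Y(q^k) tend to 1 geometrically fast while (-q)_k stays bounded away from 0,
  this forces X(1) + Y(1) = 2.

  Finally X(1) is evaluated by a Bailey pair relative to 1: beta_n = [n = 0] - 1/(2 (-q)_n^2)
  corresponds to alpha_r = (-1)^r q^(r(r+3)/2) / (1 + q^r); both this and the unit pair are
  verified by telescoping in the style of Wilf and Zeilberger. Interchanging the double sum in
  sum_n q^(n^2) beta_n and applying Cauchy's identity
  sum_k q^(k(k+j)) / ((q)_k (q)_(k+j)) = 1/(q)_inf to each column gives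
  1 - X(1)/2 = (1/(q)_inf) sum_r q^(r^2) alpha_r = (1/(q)_inf) sum_r (-1)^r q^(3r(r+1)/2) / (1 + q^r).
*)

theory Submission
  imports Defs
begin

section \<open>\<open>q\<close>-Pochhammer symbols\<close>

lemma convergent_prod_qpoch_factors:
  fixes a q :: complex
  assumes "norm q < 1"
  shows "convergent_prod (\<lambda>j. 1 - a * q ^ j)"
proof (rule abs_convergent_prod_imp_convergent_prod, rule summable_imp_abs_convergent_prod)
  have "summable (\<lambda>j. norm a * norm q ^ j)"
    using assms by (intro summable_mult summable_geometric) auto
  then show "summable (\<lambda>j. norm (1 - a * q ^ j - 1))"
    by (simp add: norm_mult norm_power)
qed

lemma qpoch_0 [simp]: "qpoch a q 0 = 1"
  by (simp add: qpoch_def)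

lemma qpoch_Suc: "qpoch a q (Suc n) = qpoch a q n * (1 - a * q ^ n)"
  by (simp add: qpoch_def)

lemma qpoch_Suc_left: "qpoch a q (Suc n) = (1 - a) * qpoch (a * q) q n"
  by (induction n) (simp_all add: qpoch_Suc mult_ac)

lemma qpoch_tendsto_qpoch_inf:
  fixes a q :: complex
  assumes "norm q < 1"
  shows "qpoch a q \<longlonglongrightarrow> qpoch_inf a q"
proof -
  have "(\<lambda>n. \<Prod>j\<le>n. 1 - a * q ^ j) \<longlonglongrightarrow> qpoch_inf a q"
    unfolding qpoch_inf_def by (rule convergent_prod_LIMSEQ[OF convergent_prod_qpoch_factors[OF assms]])
  then have "(\<lambda>n. qpoch a q (Suc n)) \<longlonglongrightarrow> qpoch_inf a q"
    by (simp add: qpoch_def lessThan_Suc_atMost)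
  then show ?thesis
    by (rule LIMSEQ_imp_Suc)
qed

lemma qpoch_inf_nonzero:
  fixes a q :: complex
  assumes "norm q < 1" "\<And>j. a * q ^ j \<noteq> 1"
  shows "qpoch_inf a q \<noteq> 0"
  unfolding qpoch_inf_def using assms by (intro prodinf_nonzero convergent_prod_qpoch_factors) auto

lemma qpoch_inf_eq_qpoch_mult_tail:
  fixes a q :: complex
  assumes "norm q < 1" "\<And>j. a * q ^ j \<noteq> 1"
  shows "qpoch_inf a q = qpoch a q n * qpoch_inf (a * q ^ n) q"
proof -
  have "qpoch_inf a q = (\<Prod>j. 1 - a * q ^ (j + n)) * qpoch a q n"
    unfolding qpoch_inf_def qpoch_def
    using assms by (intro prodinf_split_initial_segment convergent_prod_qpoch_factors) auto
  then show ?thesis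
    by (simp add: qpoch_inf_def power_add mult_ac)
qed

lemma qpoch_odd_split: "qpoch a q (2 * n + 1) = qpoch (a * q) (q\<^sup>2) n * qpoch a (q\<^sup>2) (n + 1)"
proof (induction n)
  case (Suc n)
  have "qpoch a q (2 * Suc n + 1) = qpoch a q (2 * n + 1) * (1 - a * q ^ (2 * n + 1)) * (1 - a * q ^ (2 * n + 2))"
    by (simp add: qpoch_Suc)
  also have "\<dots> = qpoch (a * q) (q\<^sup>2) n * (1 - a * q * (q\<^sup>2) ^ n) * (qpoch a (q\<^sup>2) (n + 1) * (1 - a * (q\<^sup>2) ^ (n + 1)))"
    unfolding Suc.IH by (simp add: power_mult[symmetric] power_add mult_ac) (simp add: power2_eq_square)
  also have "\<dots> = qpoch (a * q) (q\<^sup>2) (Suc n) * qpoch a (q\<^sup>2) (Suc n + 1)"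
    by (simp only: add_Suc qpoch_Suc mult_ac)
  finally show ?case .
qed (simp add: qpoch_Suc)

definition euler_phi :: "real \<Rightarrow> real" where
  "euler_phi a = (\<Prod>j. 1 - a ^ (j + 1))"

lemma euler_phi_factor_pos:
  fixes a :: real
  assumes "0 \<le> a" "a < 1"
  shows "0 < 1 - a ^ (j + 1)"
  using assms by (subst diff_gt_0_iff_gt, subst power_less_one_iff) auto

lemma euler_phi_has_prod:
  fixes a :: real
  assumes "0 \<le> a" "a < 1"
  shows "(\<lambda>j. 1 - a ^ (j + 1)) has_prod euler_phi a"
proof -
  have "convergent_prod (\<lambda>j. 1 + (- (a ^ (j + 1))))"
  proof (rule summable_imp_convergent_prod_real)
    show "summable (\<lambda>j. \<bar>- (a ^ (j + 1))\<bar>)"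
      using assms by (simp add: summable_geometric)
    show "- (a ^ (j + 1)) \<noteq> -1" for j
      using euler_phi_factor_pos[OF assms, of j] by simp
  qed
  then show ?thesis
    unfolding euler_phi_def by (simp add: convergent_prod_has_prod)
qed

lemma euler_phi_pos:
  fixes a :: real
  assumes "0 \<le> a" "a < 1"
  shows "0 < euler_phi a"
  using euler_phi_has_prod[OF assms] euler_phi_factor_pos[OF assms]
  unfolding euler_phi_def by (intro less_0_prodinf) (auto simp: has_prod_iff)

lemma euler_phi_le_norm_prod:
  fixes w :: "nat \<Rightarrow> complex"
  assumes "0 \<le> a" "a < 1" "\<And>j. norm (w j) \<le> a ^ (j + 1)"
  shows "euler_phi a \<le> norm (\<Prod>j<n. 1 + w j)"
proof -
  have "euler_phi a \<le> (\<Prod>j<n. 1 - a ^ (j + 1))"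
    unfolding euler_phi_def
    using euler_phi_has_prod[OF assms(1,2)] euler_phi_factor_pos[OF assms(1,2)] assms(1)
    by (intro prod_ge_prodinf) (auto simp: euler_phi_def less_imp_le)
  also have "\<dots> \<le> (\<Prod>j<n. norm (1 + w j))"
  proof (rule prod_mono)
    fix j
    have "1 - norm (w j) \<le> norm (1 + w j)"
      by (metis add.commute norm_diff_ineq norm_one)
    then show "0 \<le> 1 - a ^ (j + 1) \<and> 1 - a ^ (j + 1) \<le> norm (1 + w j)"
      using assms(3)[of j] euler_phi_factor_pos[OF assms(1,2), of j] by linarith
  qed
  finally show ?thesis
    by (simp add: prod_norm)
qed

lemma euler_phi_le_norm_qpoch:
  fixes b q :: complex
  assumes "norm q < 1" "norm b \<le> 1"
  shows "euler_phi (norm q) \<le> norm (qpoch (b * q) q n)"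
proof -
  have "qpoch (b * q) q n = (\<Prod>j<n. 1 + (- (b * q ^ (j + 1))))"
    by (simp add: qpoch_def mult_ac)
  also have "euler_phi (norm q) \<le> norm \<dots>"
    using assms by (intro euler_phi_le_norm_prod)
      (auto simp: norm_mult norm_power intro: mult_left_le_one_le)
  finally show ?thesis .
qed

lemma norm_divide_le_of_lower:
  fixes x y :: complex
  assumes "norm x \<le> A" "c \<le> norm y" "0 < c"
  shows "norm (x / y) \<le> A / c"
  using assms unfolding norm_divide by (intro frac_le) (auto intro: order.trans[OF _ assms(1)])

lemma norm_divide_mult_le_of_lower:
  fixes x y z :: complex
  assumes "norm x \<le> A" "c \<le> norm y" "c \<le> norm z" "0 < c"
  shows "norm (x / (y * z)) \<le> A / (c * c)"
  using norm_divide_le_of_lower[OF assms(1), of "c * c" "y * z"] assms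
  by (simp add: norm_mult mult_mono)

lemma norm_suminf_minus_head_le:
  fixes f :: "nat \<Rightarrow> 'a::banach"
  assumes "summable f" "0 \<le> r" "r < 1" "\<And>n. norm (f (Suc n)) \<le> r ^ n * B"
  shows "norm (suminf f - f 0) \<le> B / (1 - r)"
proof -
  have "norm (\<Sum>n. f (Suc n)) \<le> (\<Sum>n. r ^ n * B)"
    using assms by (intro norm_suminf_le summable_mult2 summable_geometric) auto
  also have "\<dots> = B / (1 - r)"
    using sums_mult2[OF geometric_sums, of r B] assms by (simp add: sums_iff)
  finally show ?thesis
    using suminf_split_head[OF assms(1)] by simp
qed

lemma of_nat_mult_power_bounded:
  fixes r :: real
  assumes "0 \<le> r" "r < 1"
  obtains K where "\<And>n. real n * r ^ n \<le> K"
proof -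
  have "(\<lambda>n. of_nat n * r ^ n) \<longlonglongrightarrow> 0"
    using assms by (intro powser_times_n_limit_0) simp
  then have "Bseq (\<lambda>n. of_nat n * r ^ n)"
    by (rule convergent_imp_Bseq[OF convergentI])
  then obtain K where "\<forall>n. norm (real n * r ^ n) \<le> K"
    by (meson BseqE)
  then show ?thesis
    by (intro that[of K]) (simp add: abs_le_iff)
qed

lemma sum_int_telescope:
  fixes g :: "int \<Rightarrow> 'a::ab_group_add"
  assumes "a - 1 \<le> b"
  shows "(\<Sum>r\<in>{a..b}. g (r + 1) - g r) = g (b + 1) - g a"
  using assms
proof (induction b rule: int_ge_induct)
  case (step i)
  have "{a..i + 1} = insert (i + 1) {a..i}"
    using step.hyps by auto
  then show ?case
    using step by simp
qed simp

lemma sum_symmetric_int_reflect: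
  fixes f :: "int \<Rightarrow> 'a::comm_monoid_add"
  shows "(\<Sum>r\<in>{-N..N}. f (- r)) = (\<Sum>r\<in>{-N..N}. f r)"
  by (rule sum.reindex_bij_witness[of _ uminus uminus]) auto

lemma sum_symmetric_int_extend:
  fixes f :: "int \<Rightarrow> 'a::comm_monoid_add"
  assumes "0 \<le> N"
  shows "(\<Sum>r\<in>{-N-1..N+1}. f r) = f (-N-1) + f (N+1) + (\<Sum>r\<in>{-N..N}. f r)"
proof -
  have "{-N-1..N+1} = insert (-N-1) (insert (N+1) {-N..N})"
    using assms by auto
  then show ?thesis
    using assms by (simp add: add.assoc)
qed

definition choose2 :: "int \<Rightarrow> int" where
  "choose2 r = r * (r - 1) div 2"

lemma choose2_0 [simp]: "choose2 0 = 0"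
  by (simp add: choose2_def)

lemma two_mult_choose2: "2 * choose2 r = r * (r - 1)"
proof -
  have "even (r * (r - 1))"
    by auto
  then show ?thesis
    unfolding choose2_def by simp
qed

lemma choose2_add_1: "choose2 (r + 1) = choose2 r + r"
  using two_mult_choose2[of r] two_mult_choose2[of "r + 1"] by (simp add: algebra_simps)

lemma choose2_uminus: "choose2 (- r) = choose2 r + r"
  using two_mult_choose2[of r] two_mult_choose2[of "- r"] by (simp add: algebra_simps)

lemma choose2_nonneg: "0 \<le> choose2 r"
proof -
  have "0 \<le> r * (r - 1)"
    by (cases "r \<ge> 1") (auto simp: mult_nonpos_nonpos)
  then show ?thesis
    using two_mult_choose2[of r] by linarith
qed

lemma pentagonal_exponent: "3 * r * (r + 1) div 2 = choose2 r + 2 * r + r * r"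
proof -
  have "even (3 * r * (r + 1))"
    by simp
  then have "2 * (3 * r * (r + 1) div 2) = 3 * r * (r + 1)"
    by simp
  then show ?thesis
    using two_mult_choose2[of r] by (simp add: algebra_simps)
qed

lemma minus_one_power_int_add_1: "(-1 :: 'a :: field) powi (r + 1) = - ((-1) powi r)"
  by (simp add: power_int_add_1)

lemma unit_wz_identity:
  fixes s p x u B1 B2 :: complex
  assumes "x \<noteq> 0"
  shows "(- s) * (p * x) * ((1 - u / x) * B1) * B2 - s * p * B1 * ((1 - u * x) * B2)
       = - (s * p * (1 + x) * (1 - u) * B1 * B2)"
  using assms by (simp add: field_simps)

lemma mq_wz_identity:
  fixes x u P s p B1 B2 :: complex
  assumes "x \<noteq> 0" "1 + x \<noteq> 0" "1 - u \<noteq> 0"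
  shows "(P * (1 + u))\<^sup>2 * (2 * s * (p * x) / (1 + x)) * B1 * B2
           - P\<^sup>2 * (2 * s * (p * x) / (1 + x)) * ((1 - u / x) * B1) * ((1 - u * x) * B2)
       = -2 * (- s) * (p * x) * u * P\<^sup>2 / (1 - u) * ((1 - u / x) * B1) * B2
           - (-2 * s * p * u * P\<^sup>2 / (1 - u) * B1 * ((1 - u * x) * B2))"
proof -
  define K where "K = 2 * P\<^sup>2 * s * p * B1 * B2"
  have h1: "(1 + u)\<^sup>2 - (1 - u / x) * (1 - u * x) = u * (1 + x)\<^sup>2 / x"
    using assms by (simp add: field_simps power2_eq_square)
  have h2: "x * (1 - u / x) + (1 - u * x) = (1 + x) * (1 - u)"
    using assms by (simp add: field_simps)
  have "x + x * x \<noteq> 0"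
    using assms by (metis distrib_left mult.right_neutral mult_eq_0_iff add.commute)
  then have "(P * (1 + u))\<^sup>2 * (2 * s * (p * x) / (1 + x)) * B1 * B2
               - P\<^sup>2 * (2 * s * (p * x) / (1 + x)) * ((1 - u / x) * B1) * ((1 - u * x) * B2)
           = K * (x / (1 + x)) * ((1 + u)\<^sup>2 - (1 - u / x) * (1 - u * x))"
    unfolding K_def by (simp add: divide_inverse algebra_simps power2_eq_square)
  also have "\<dots> = K * u * (1 + x)"
    unfolding h1 using assms \<open>x + x * x \<noteq> 0\<close> by (simp add: field_simps power2_eq_square)
  also have "\<dots> = K * (u / (1 - u)) * (x * (1 - u / x) + (1 - u * x))"
    unfolding h2 using assms by (simp add: field_simps)
  also have "\<dots> = -2 * (- s) * (p * x) * u * P\<^sup>2 / (1 - u) * ((1 - u / x) * B1) * B2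
                   - (-2 * s * p * u * P\<^sup>2 / (1 - u) * B1 * ((1 - u * x) * B2))"
    unfolding K_def by (simp add: divide_inverse algebra_simps power2_eq_square)
  finally show ?thesis .
qed

locale qseries =
  fixes q :: complex
  assumes norm_q_less_1: "norm q < 1" and q_nonzero: "q \<noteq> 0"
begin

definition poch_lb :: real where
  "poch_lb = euler_phi (norm q)"

lemma poch_lb_pos: "0 < poch_lb"
  unfolding poch_lb_def using norm_q_less_1 by (intro euler_phi_pos) auto

lemma poch_lb_le_norm_qpoch: "norm b \<le> 1 \<Longrightarrow> poch_lb \<le> norm (qpoch (b * q) q n)"
  unfolding poch_lb_def using norm_q_less_1 by (rule euler_phi_le_norm_qpoch)

lemma poch_lb_le_norm_qpoch_q: "poch_lb \<le> norm (qpoch q q n)"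
  using poch_lb_le_norm_qpoch[of 1] by simp

lemma poch_lb_le_norm_qpoch_mq: "poch_lb \<le> norm (qpoch (- q) q n)"
  using poch_lb_le_norm_qpoch[of "-1"] by simp

lemma qpoch_q_nonzero [simp]: "qpoch q q n \<noteq> 0"
  using poch_lb_le_norm_qpoch_q[of n] poch_lb_pos by auto

lemma qpoch_mq_nonzero [simp]: "qpoch (- q) q n \<noteq> 0"
  using poch_lb_le_norm_qpoch_mq[of n] poch_lb_pos by auto

lemma norm_power_q_le_1: "norm (q ^ n) \<le> 1"
  using norm_q_less_1 by (simp add: norm_power power_le_one)

lemma norm_power_q_antimono: "m \<le> n \<Longrightarrow> norm q ^ n \<le> norm q ^ m"
  using norm_q_less_1 by (intro power_decreasing) auto

lemma norm_power_q_less_1: "0 < n \<Longrightarrow> norm q ^ n < 1"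
  using norm_q_less_1 q_nonzero power_Suc_less_one[of "norm q"] by (cases n) auto

lemma power_q_ne_1: "0 < n \<Longrightarrow> q ^ n \<noteq> 1"
  using norm_power_q_less_1[of n] by (auto simp flip: norm_power)

lemma power_q_ne_minus_1: "q ^ n \<noteq> - 1"
proof
  assume "q ^ n = - 1"
  then have "norm q ^ n = 1" and "0 < n"
    by (simp flip: norm_power, cases n) auto
  then show False
    using norm_power_q_less_1[of n] by linarith
qed

lemma one_plus_power_q_nonzero [simp]: "1 + q ^ n \<noteq> 0"
  using power_q_ne_minus_1[of n] by (simp add: add_eq_0_iff)

lemma one_plus_power_int_q_nonzero [simp]: "1 + q powi r \<noteq> 0"
proof (cases "0 \<le> r")
  case True
  then show ?thesis
    using one_plus_power_q_nonzero[of "nat r"] by (simp add: power_int_def)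
next
  case False
  then have "q powi r = inverse (q ^ nat (- r))"
    by (simp add: power_int_def power_inverse)
  then show ?thesis
    using power_q_ne_minus_1[of "nat (- r)"]
    by (auto simp: add_eq_0_iff) (metis inverse_1 inverse_inverse_eq inverse_minus_eq)
qed

definition inv_qfac :: "int \<Rightarrow> complex" where
  "inv_qfac k = (if k < 0 then 0 else inverse (qpoch q q (nat k)))"

lemma inv_qfac_of_nat: "inv_qfac (int n) = inverse (qpoch q q n)"
  by (simp add: inv_qfac_def)

lemma inv_qfac_diff_1: "inv_qfac (k - 1) = (1 - q powi k) * inv_qfac k"
proof (cases "k \<le> 0")
  case True
  then show ?thesis
    by (cases "k = 0") (auto simp: inv_qfac_def)
next
  case False
  then obtain m where m: "k = int (Suc m)"
    by (metis gr0_implies_Suc not_le zero_less_imp_eq_int of_nat_0_less_iff)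
  have "1 - q ^ Suc m \<noteq> 0"
    using power_q_ne_1[of "Suc m"] by auto
  moreover have "nat k = Suc m" "nat (k - 1) = m" "\<not> k < 0" "\<not> k - 1 < 0"
    using m by auto
  moreover have "q powi k = q ^ Suc m"
    unfolding m by (rule power_int_of_nat)
  ultimately show ?thesis
    unfolding inv_qfac_def by (simp add: qpoch_Suc field_simps)
qed

lemma norm_inv_qfac_le: "norm (inv_qfac k) \<le> 1 / poch_lb"
proof (cases "k < 0")
  case False
  then have "norm (inv_qfac k) = 1 / norm (qpoch q q (nat k))"
    by (simp add: inv_qfac_def norm_inverse divide_inverse)
  also have "\<dots> \<le> 1 / poch_lb"
    using poch_lb_le_norm_qpoch_q[of "nat k"] poch_lb_pos by (intro divide_left_mono) auto
  finally show ?thesis .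
qed (use poch_lb_pos in \<open>simp add: inv_qfac_def\<close>)

lemma qpoch_tendsto_q: "qpoch q q \<longlonglongrightarrow> qpoch_inf q q"
  using norm_q_less_1 by (rule qpoch_tendsto_qpoch_inf)

lemma qpoch_inf_q_nonzero: "qpoch_inf q q \<noteq> 0"
proof (rule qpoch_inf_nonzero[OF norm_q_less_1])
  show "q * q ^ j \<noteq> 1" for j
    using power_q_ne_1[of "Suc j"] by simp
qed

lemma qpoch_inf_mq_nonzero: "qpoch_inf (- q) q \<noteq> 0"
proof (rule qpoch_inf_nonzero[OF norm_q_less_1])
  show "- q * q ^ j \<noteq> 1" for j
    using power_q_ne_minus_1[of "Suc j"] by (auto simp: minus_equation_iff)
qed

lemma summable_geometric_q: "summable (\<lambda>n. norm q ^ n * B)"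
  using norm_q_less_1 by (intro summable_mult2 summable_geometric) auto

lemma geometric_q_tendsto_0: "(\<lambda>n. norm q ^ n * B) \<longlonglongrightarrow> 0"
  using norm_q_less_1 by (intro tendsto_mult_left_zero LIMSEQ_power_zero) auto

lemma norm_power_q_square_le: "norm (q ^ (n * n)) \<le> norm q ^ n"
  unfolding norm_power by (rule norm_power_q_antimono) (cases n; simp)

lemma power_int_q_add: "q powi (m + n) = q powi m * q powi n"
  using q_nonzero by (simp add: power_int_add)

lemma power_int_q_diff: "q powi (m - n) = q powi m / q powi n"
  using q_nonzero by (simp add: power_int_diff)

section \<open>Bailey pairs\<close>

text \<open>The Bailey-pair relation relative to \<open>1\<close>, with \<open>\<alpha>\<close> indexed by all integers:
  \<open>(\<alpha>, \<beta>)\<close> is a Bailey pair iff \<open>\<beta> = bailey_sum \<alpha>\<close>.\<close>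

definition bailey_sum :: "(int \<Rightarrow> complex) \<Rightarrow> nat \<Rightarrow> complex" where
  "bailey_sum \<alpha> n = (\<Sum>r\<in>{-int n..int n}. \<alpha> r * inv_qfac (int n - r) * inv_qfac (int n + r))"

definition alpha_unit :: "int \<Rightarrow> complex" where
  "alpha_unit r = (-1) powi r * q powi (choose2 r + r)"

definition unit_wz_cert :: "nat \<Rightarrow> int \<Rightarrow> complex" where
  "unit_wz_cert n r = (-1) powi r * q powi (choose2 r) * inv_qfac (int n - r) * inv_qfac (int n + r - 1)"

lemma unit_wz_cert_step:
  "unit_wz_cert n (r + 1) - unit_wz_cert n r
     = - ((-1) powi r * q powi (choose2 r) * (1 + q powi r) * (1 - q ^ n)
            * inv_qfac (int n - r) * inv_qfac (int n + r))"
proof -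
  have "inv_qfac (int n - (r + 1)) = (1 - q ^ n / q powi r) * inv_qfac (int n - r)"
    using inv_qfac_diff_1[of "int n - r"] by (simp add: power_int_q_diff diff_diff_eq)
  moreover have "inv_qfac (int n + r - 1) = (1 - q ^ n * q powi r) * inv_qfac (int n + r)"
    using inv_qfac_diff_1[of "int n + r"] by (simp add: power_int_q_add)
  moreover have "int n + (r + 1) - 1 = int n + r"
    by simp
  ultimately show ?thesis
    unfolding unit_wz_cert_def minus_one_power_int_add_1 choose2_add_1 power_int_q_add
    using unit_wz_identity[of "q powi r"] q_nonzero by simp
qed

lemma bailey_sum_alpha_unit: "bailey_sum alpha_unit n = (if n = 0 then 1 else 0)"
proof (cases "n = 0")
  case True
  then show ?thesis
    by (simp add: bailey_sum_def alpha_unit_def inv_qfac_def)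
next
  case False
  define u where "u r = (-1) powi r * q powi (choose2 r) * inv_qfac (int n - r) * inv_qfac (int n + r)" for r
  have "(\<Sum>r\<in>{-int n..int n}. unit_wz_cert n (r + 1) - unit_wz_cert n r)
          = unit_wz_cert n (int n + 1) - unit_wz_cert n (- int n)"
    by (rule sum_int_telescope) auto
  also have "\<dots> = 0"
    by (simp add: unit_wz_cert_def inv_qfac_def)
  finally have "(\<Sum>r\<in>{-int n..int n}. - ((1 - q ^ n) * (u r + u r * q powi r))) = 0"
    unfolding unit_wz_cert_step by (simp add: u_def algebra_simps)
  moreover have "1 - q ^ n \<noteq> 0"
    using power_q_ne_1[of n] False by auto
  ultimately have "(\<Sum>r\<in>{-int n..int n}. u r) + (\<Sum>r\<in>{-int n..int n}. u r * q powi r) = 0"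
    by (simp add: sum_negf sum.distrib flip: sum_distrib_left)
  moreover have "(\<Sum>r\<in>{-int n..int n}. u r) = bailey_sum alpha_unit n"
    unfolding sum_symmetric_int_reflect[of u, symmetric]
    by (simp add: u_def bailey_sum_def alpha_unit_def power_int_minus_one_minus choose2_uminus algebra_simps)
  moreover have "(\<Sum>r\<in>{-int n..int n}. u r * q powi r) = bailey_sum alpha_unit n"
    by (simp add: u_def bailey_sum_def alpha_unit_def power_int_q_add algebra_simps)
  ultimately show ?thesis
    using False by simp
qed

definition alpha_mq :: "int \<Rightarrow> complex" where
  "alpha_mq r = 2 * (-1) powi r * q powi (choose2 r + r) / (1 + q powi r)"

definition mq_wz_F :: "nat \<Rightarrow> int \<Rightarrow> complex" where
  "mq_wz_F n r = (qpoch (- q) q n)\<^sup>2 * alpha_mq r * inv_qfac (int n - r) * inv_qfac (int n + r)"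

definition mq_wz_G :: "nat \<Rightarrow> int \<Rightarrow> complex" where
  "mq_wz_G n r = -2 * (-1) powi r * q powi (choose2 r) * q ^ Suc n * (qpoch (- q) q n)\<^sup>2
      / (1 - q ^ Suc n) * inv_qfac (int n + 1 - r) * inv_qfac (int n + r)"

lemma mq_wz_step: "mq_wz_F (Suc n) r - mq_wz_F n r = mq_wz_G n (r + 1) - mq_wz_G n r"
proof -
  define u where "u = q ^ Suc n"
  define x where "x = q powi r"
  define p where "p = q powi (choose2 r)"
  define B1 where "B1 = inv_qfac (int n + 1 - r)"
  define B2 where "B2 = inv_qfac (int n + 1 + r)"
  have "x \<noteq> 0" "1 + x \<noteq> 0" "1 - u \<noteq> 0"
    using q_nonzero power_q_ne_1[of "Suc n"] by (auto simp: x_def u_def)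
  note identity = mq_wz_identity[OF this]
  have B1': "inv_qfac (int n - r) = (1 - u / x) * B1"
    using inv_qfac_diff_1[of "int n + 1 - r"]
    by (simp add: B1_def u_def x_def power_int_q_diff power_int_q_add)
  have B2': "inv_qfac (int n + r) = (1 - u * x) * B2"
    using inv_qfac_diff_1[of "int n + 1 + r"] by (simp add: B2_def u_def x_def power_int_q_add)
  have "alpha_mq r = 2 * (-1) powi r * (p * x) / (1 + x)"
    by (simp add: alpha_mq_def p_def x_def power_int_q_add)
  moreover have "mq_wz_F (Suc n) r = (qpoch (- q) q n * (1 + u))\<^sup>2 * alpha_mq r * B1 * B2"
    by (simp add: mq_wz_F_def qpoch_Suc u_def B1_def B2_def add_ac)
  moreover have "mq_wz_F n r = (qpoch (- q) q n)\<^sup>2 * alpha_mq r * ((1 - u / x) * B1) * ((1 - u * x) * B2)"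
    by (simp add: mq_wz_F_def B1' B2')
  moreover have "mq_wz_G n (r + 1) = -2 * (- ((-1) powi r)) * (p * x) * u * (qpoch (- q) q n)\<^sup>2
                    / (1 - u) * ((1 - u / x) * B1) * B2"
  proof -
    have e1: "int n + 1 - (r + 1) = int n - r" and e2: "int n + (r + 1) = int n + 1 + r"
      by simp_all
    show ?thesis
      unfolding mq_wz_G_def e1 e2 minus_one_power_int_add_1 choose2_add_1 power_int_q_add
      by (simp add: B1' B2_def u_def p_def x_def)
  qed
  moreover have "mq_wz_G n r = -2 * (-1) powi r * p * u * (qpoch (- q) q n)\<^sup>2 / (1 - u) * B1 * ((1 - u * x) * B2)"
    by (simp add: mq_wz_G_def B2' B1_def u_def p_def)
  ultimately show ?thesis
    using identity by (simp only: mult.assoc)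
qed

lemma sum_mq_wz_F: "(\<Sum>r\<in>{-int n..int n}. mq_wz_F n r) = 1"
proof (induction n)
  case 0
  then show ?case
    by (simp add: mq_wz_F_def alpha_mq_def inv_qfac_def)
next
  case (Suc n)
  have "(\<Sum>r\<in>{-int n - 1..int n + 1}. mq_wz_F (Suc n) r)
      = (\<Sum>r\<in>{-int n - 1..int n + 1}. mq_wz_F n r) + (\<Sum>r\<in>{-int n - 1..int n + 1}. mq_wz_G n (r + 1) - mq_wz_G n r)"
    unfolding sum.distrib[symmetric] by (intro sum.cong) (auto simp: mq_wz_step[symmetric])
  moreover have "(\<Sum>r\<in>{-int n - 1..int n + 1}. mq_wz_G n (r + 1) - mq_wz_G n r) = 0"
    by (subst sum_int_telescope) (auto simp: mq_wz_G_def inv_qfac_def)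
  moreover have "(\<Sum>r\<in>{-int n - 1..int n + 1}. mq_wz_F n r) = (\<Sum>r\<in>{-int n..int n}. mq_wz_F n r)"
    by (subst sum_symmetric_int_extend) (auto simp: mq_wz_F_def inv_qfac_def)
  moreover have "{-int (Suc n)..int (Suc n)} = {-int n - 1..int n + 1}"
    by simp
  ultimately show ?case
    using Suc.IH by (simp only:) simp
qed

lemma bailey_sum_alpha_mq: "bailey_sum alpha_mq n = inverse ((qpoch (- q) q n)\<^sup>2)"
proof -
  have "(qpoch (- q) q n)\<^sup>2 * bailey_sum alpha_mq n = 1"
    using sum_mq_wz_F[of n] by (simp add: mq_wz_F_def bailey_sum_def sum_distrib_left mult.assoc)
  then show ?thesis
    by (simp add: field_simps)
qed

definition alpha_pent :: "int \<Rightarrow> complex" where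
  "alpha_pent r = alpha_unit r - alpha_mq r / 2"

lemma alpha_pent_eq: "alpha_pent r = (-1) powi r * q powi (choose2 r + 2 * r) / (1 + q powi r)"
proof -
  define x where "x = q powi r"
  define c where "c = (-1) powi r * q powi (choose2 r + r)"
  have "q powi (choose2 r + 2 * r) = q powi (choose2 r + r) * x"
    by (simp add: x_def algebra_simps flip: power_int_q_add)
  moreover have "alpha_mq r = 2 * (c / (1 + x))"
    unfolding alpha_mq_def c_def x_def by (simp only: times_divide_eq_right mult.assoc)
  then have "alpha_pent r = c - c / (1 + x)"
    by (simp add: alpha_pent_def alpha_unit_def c_def del: times_divide_eq_right)
  moreover have "1 + x \<noteq> 0"
    by (simp add: x_def)
  ultimately show ?thesis
    by (simp add: c_def x_def field_simps)
qed

lemma bailey_sum_alpha_pent: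
  "bailey_sum alpha_pent n = (if n = 0 then 1 else 0) - inverse ((qpoch (- q) q n)\<^sup>2) / 2"
proof -
  have "bailey_sum alpha_pent n = bailey_sum alpha_unit n - bailey_sum alpha_mq n / 2"
    by (simp add: bailey_sum_def alpha_pent_def algebra_simps sum_subtractf sum_divide_distrib)
  then show ?thesis
    by (simp add: bailey_sum_alpha_unit bailey_sum_alpha_mq)
qed

lemma norm_alpha_pent_le: "norm (alpha_pent r) \<le> 1 / (1 - norm q)"
proof -
  have lower: "1 - norm q \<le> norm (1 + q ^ m)" for m
  proof (cases m)
    case (Suc k)
    then show ?thesis
      using norm_diff_ineq[of 1 "q ^ m"] norm_power_q_antimono[of 1 m] by (simp add: norm_power norm_mult)
  qed (simp, insert norm_ge_zero[of q], linarith)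
  have norm_le_1: "norm (q powi k) \<le> 1" if "0 \<le> k" for k
    using that norm_power_q_le_1[of "nat k"] by (simp add: power_int_def)
  obtain e :: int and m :: nat
    where form: "alpha_pent r = (-1) powi r * q powi e / (1 + q ^ m)" and "0 \<le> e"
  proof (cases "0 \<le> r")
    case True
    then show ?thesis
      using choose2_nonneg[of r]
      by (intro that[of "choose2 r + 2 * r" "nat r"]) (simp_all add: alpha_pent_eq power_int_def)
  next
    case False
    have "q powi (- r) \<noteq> 0"
      using q_nonzero by simp
    then have "alpha_pent r
        = (-1) powi r * (q powi (choose2 r + 2 * r) * q powi (- r)) / ((1 + q powi r) * q powi (- r))"
      unfolding alpha_pent_eq by simp
    also have "(1 + q powi r) * q powi (- r) = 1 + q ^ nat (- r)"
      using q_nonzero False by (simp add: distrib_right power_int_def power_int_minus field_simps)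
    also have "q powi (choose2 r + 2 * r) * q powi (- r) = q powi (choose2 (- r))"
      by (simp add: choose2_uminus add_ac flip: power_int_q_add)
    finally show ?thesis
      using choose2_nonneg[of "- r"] by (intro that[of "choose2 (- r)" "nat (- r)"]) simp_all
  qed
  then have "norm (alpha_pent r) = norm (q powi e) / norm (1 + q ^ m)"
    by (simp add: norm_mult norm_divide norm_power_int)
  also have "\<dots> \<le> 1 / (1 - norm q)"
    using norm_le_1[OF \<open>0 \<le> e\<close>] lower[of m] norm_q_less_1 by (intro frac_le) auto
  finally show ?thesis .
qed

section \<open>Cauchy's identity\<close>

definition durfee_term :: "nat \<Rightarrow> nat \<Rightarrow> complex" where
  "durfee_term j k = q ^ (k * k + j * k) / (qpoch q q k * qpoch q q (k + j))"

lemma norm_durfee_term_le: "norm (durfee_term j k) \<le> norm q ^ k * (1 / (poch_lb * poch_lb))"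
proof -
  have "norm (q ^ (k * k + j * k)) \<le> norm q ^ k"
    unfolding norm_power by (rule norm_power_q_antimono) (cases k; simp)
  then show ?thesis
    unfolding durfee_term_def
    using norm_divide_mult_le_of_lower poch_lb_le_norm_qpoch_q poch_lb_pos by fastforce
qed

lemma summable_durfee_term: "summable (durfee_term j)"
  by (rule summable_comparison_test'[OF summable_geometric_q norm_durfee_term_le])

lemma norm_suminf_durfee_term_minus_head_le:
  "norm ((\<Sum>k. durfee_term j k) - inverse (qpoch q q j)) \<le> norm q ^ j / (poch_lb * poch_lb) / (1 - norm q)"
proof -
  have "norm (durfee_term j (Suc k)) \<le> norm q ^ k * (norm q ^ j / (poch_lb * poch_lb))" for k
  proof -
    have "norm (q ^ (Suc k * Suc k + j * Suc k)) \<le> norm q ^ (k + j)"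
      unfolding norm_power by (rule norm_power_q_antimono) (simp add: algebra_simps)
    then have "norm (durfee_term j (Suc k)) \<le> norm q ^ (k + j) / (poch_lb * poch_lb)"
      unfolding durfee_term_def
      by (intro norm_divide_mult_le_of_lower poch_lb_le_norm_qpoch_q poch_lb_pos)
    then show ?thesis
      by (simp add: power_add)
  qed
  then have "norm (suminf (durfee_term j) - durfee_term j 0) \<le> norm q ^ j / (poch_lb * poch_lb) / (1 - norm q)"
    using summable_durfee_term norm_q_less_1 by (intro norm_suminf_minus_head_le) auto
  moreover have "durfee_term j 0 = inverse (qpoch q q j)"
    by (simp add: durfee_term_def divide_inverse)
  ultimately show ?thesis
    by simp
qed

definition durfee_cert :: "nat \<Rightarrow> nat \<Rightarrow> complex" where
  "durfee_cert j k = q ^ (k * k + j * k) * (1 - q ^ k) / (qpoch q q k * qpoch q q (k + j))"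

lemma durfee_cert_step:
  "durfee_cert j k - durfee_cert j (Suc k) = durfee_term j k - durfee_term (Suc j) k"
proof -
  define p where "p = q ^ (k * k + j * k)"
  define X where "X = q ^ k"
  define Y where "Y = q ^ Suc (k + j)"
  define D where "D = qpoch q q k * qpoch q q (k + j)"
  have "1 - Y \<noteq> 0" "1 - q ^ Suc k \<noteq> 0" "D \<noteq> 0"
    using power_q_ne_1[of "Suc (k + j)"] power_q_ne_1[of "Suc k"] by (auto simp: Y_def D_def)
  have e1: "Suc k * Suc k + j * Suc k = (k * k + j * k) + k + Suc (k + j)"
    and e2: "k * k + Suc j * k = (k * k + j * k) + k"
    and e3: "Suc k + j = Suc (k + j)" "k + Suc j = Suc (k + j)"
    by (simp_all add: algebra_simps)
  have "durfee_cert j (Suc k)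
      = p * X * Y * (1 - q ^ Suc k) / ((D * (1 - Y)) * (1 - q ^ Suc k))"
    unfolding durfee_cert_def e1 e3 qpoch_Suc
    by (simp add: p_def X_def Y_def D_def power_add mult_ac)
  also have "\<dots> = p * X * Y / (D * (1 - Y))"
    using \<open>1 - q ^ Suc k \<noteq> 0\<close> by (rule mult_divide_mult_cancel_right)
  finally have "durfee_cert j (Suc k) = p * X * Y / (D * (1 - Y))" .
  moreover have "durfee_term (Suc j) k = p * X / (D * (1 - Y))"
    unfolding durfee_term_def e2 e3 qpoch_Suc
    by (simp add: p_def X_def Y_def D_def power_add mult_ac)
  moreover have "durfee_cert j k = p * (1 - X) / D" "durfee_term j k = p / D"
    by (simp_all add: durfee_cert_def durfee_term_def p_def X_def D_def)
  ultimately show ?thesis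
    using \<open>1 - Y \<noteq> 0\<close> \<open>D \<noteq> 0\<close> by (simp only:) (simp add: field_simps)
qed

lemma durfee_cert_tendsto_0: "durfee_cert j \<longlonglongrightarrow> 0"
proof (rule Lim_null_comparison)
  have "norm (durfee_cert j k) \<le> norm q ^ k * (2 / (poch_lb * poch_lb))" for k
  proof -
    have "norm (q ^ (k * k + j * k)) \<le> norm q ^ k"
      unfolding norm_power by (rule norm_power_q_antimono) (cases k; simp)
    moreover have "norm (1 - q ^ k) \<le> 2"
      using norm_triangle_ineq4[of 1 "q ^ k"] norm_power_q_le_1[of k] by simp
    ultimately have "norm (q ^ (k * k + j * k) * (1 - q ^ k)) \<le> norm q ^ k * 2"
      unfolding norm_mult by (intro mult_mono) auto
    then show ?thesis
      unfolding durfee_cert_def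
      using norm_divide_mult_le_of_lower poch_lb_le_norm_qpoch_q poch_lb_pos by fastforce
  qed
  then show "\<forall>\<^sub>F k in sequentially. norm (durfee_cert j k) \<le> norm q ^ k * (2 / (poch_lb * poch_lb))"
    by simp
qed (rule geometric_q_tendsto_0)

lemma suminf_durfee_term_Suc: "(\<Sum>k. durfee_term (Suc j) k) = (\<Sum>k. durfee_term j k)"
proof -
  have "(\<lambda>k. durfee_term j k - durfee_term (Suc j) k) sums (durfee_cert j 0 - 0)"
    unfolding durfee_cert_step[symmetric] by (rule telescope_sums'[OF durfee_cert_tendsto_0])
  then show ?thesis
    using suminf_diff[OF summable_durfee_term summable_durfee_term, of j "Suc j"]
    by (simp add: durfee_cert_def sums_iff)
qed

text \<open>Cauchy's identity \<open>\<Sum>\<^sub>k q\<^sup>k\<^sup>(\<^sup>k\<^sup>+\<^sup>j\<^sup>) / ((q;q)\<^sub>k (q;q)\<^sub>k\<^sub>+\<^sub>j) = 1/(q;q)\<^sub>\<infinity>\<close>: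
  the sum does not depend on \<open>j\<close>, and as \<open>j \<rightarrow> \<infinity>\<close> only its first term \<open>1/(q;q)\<^sub>j\<close> survives.\<close>

lemma durfee_term_sums: "durfee_term j sums inverse (qpoch_inf q q)"
proof -
  have "(\<lambda>m. inverse (qpoch q q (j + m))) \<longlonglongrightarrow> inverse (qpoch_inf q q)"
    using LIMSEQ_ignore_initial_segment[OF qpoch_tendsto_q, of j] qpoch_inf_q_nonzero
    by (intro tendsto_inverse) (simp_all add: add.commute)
  moreover have "(\<lambda>m. (\<Sum>k. durfee_term (j + m) k) - inverse (qpoch q q (j + m))) \<longlonglongrightarrow> 0"
  proof (rule Lim_null_comparison)
    show "\<forall>\<^sub>F m in sequentially. norm ((\<Sum>k. durfee_term (j + m) k) - inverse (qpoch q q (j + m)))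
            \<le> norm q ^ m * (norm q ^ j / (poch_lb * poch_lb) / (1 - norm q))"
      using norm_suminf_durfee_term_minus_head_le[of "j + _"]
      by (intro always_eventually allI) (simp add: power_add mult_ac)
  qed (rule geometric_q_tendsto_0)
  ultimately have "(\<lambda>m. \<Sum>k. durfee_term (j + m) k) \<longlonglongrightarrow> inverse (qpoch_inf q q)"
    using tendsto_add by fastforce
  moreover have "(\<Sum>k. durfee_term (j + m) k) = (\<Sum>k. durfee_term j k)" for m
    by (induction m) (simp_all add: suminf_durfee_term_Suc)
  ultimately have "(\<Sum>k. durfee_term j k) = inverse (qpoch_inf q q)"
    by (simp add: LIMSEQ_const_iff)
  then show ?thesis
    using summable_durfee_term by (simp add: sums_iff)
qed

section \<open>The identity \<open>X(1) + Y(1) = 2\<close>\<close>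

lemma poch_lb_le_norm_qpoch_zq: "norm z \<le> 1 \<Longrightarrow> poch_lb \<le> norm (qpoch (- (z * q)) q n)"
  using poch_lb_le_norm_qpoch[of "- z"] by simp

lemma norm_zq_le_1: "norm z \<le> 1 \<Longrightarrow> norm (z * q) \<le> 1"
  using norm_q_less_1 by (auto simp: norm_mult intro: mult_le_one)

lemma one_plus_zq_nonzero: "norm z \<le> 1 \<Longrightarrow> 1 + z * q \<noteq> 0"
  using poch_lb_le_norm_qpoch_zq[of z 1] poch_lb_pos by (auto simp: qpoch_def)

definition X_term :: "complex \<Rightarrow> nat \<Rightarrow> complex" where
  "X_term z n = q ^ (n * n) * z ^ n / (qpoch (- q) q n * qpoch (- (z * q)) q n)"

definition X_fun :: "complex \<Rightarrow> complex" where
  "X_fun z = suminf (X_term z)"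

definition Y_term :: "complex \<Rightarrow> nat \<Rightarrow> complex" where
  "Y_term z m = (- (z * q)) ^ m / qpoch (- q) q m"

definition Y_fun :: "complex \<Rightarrow> complex" where
  "Y_fun z = suminf (Y_term z)"

lemma norm_X_term_le:
  assumes "norm z \<le> 1"
  shows "norm (X_term z n) \<le> norm q ^ n * (1 / (poch_lb * poch_lb))"
proof -
  have "norm (q ^ (n * n) * z ^ n) \<le> norm q ^ n * 1"
    unfolding norm_mult using norm_power_q_square_le[of n] assms
    by (intro mult_mono) (auto simp: norm_power power_le_one)
  then show ?thesis
    unfolding X_term_def using poch_lb_le_norm_qpoch_mq poch_lb_le_norm_qpoch_zq[OF assms] poch_lb_pos
    by (simp add: norm_divide_mult_le_of_lower)
qed

lemma summable_norm_X_term: "norm z \<le> 1 \<Longrightarrow> summable (\<lambda>n. norm (X_term z n))"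
  by (rule summable_norm_comparison_test[OF _ summable_geometric_q]) (blast intro: norm_X_term_le)

lemma summable_X_term: "norm z \<le> 1 \<Longrightarrow> summable (X_term z)"
  by (rule summable_norm_cancel[OF summable_norm_X_term])

lemma norm_Y_term_le:
  assumes "norm z \<le> 1"
  shows "norm (Y_term z m) \<le> norm q ^ m * (1 / poch_lb)"
proof -
  have "norm ((- (z * q)) ^ m) \<le> norm q ^ m"
    unfolding norm_power norm_minus_cancel norm_mult
    using assms by (intro power_mono) (auto intro: mult_left_le_one_le)
  then show ?thesis
    unfolding Y_term_def using poch_lb_le_norm_qpoch_mq poch_lb_pos
    by (simp add: norm_divide_le_of_lower)
qed

lemma summable_Y_term: "norm z \<le> 1 \<Longrightarrow> summable (Y_term z)"
  by (rule summable_comparison_test'[OF summable_geometric_q norm_Y_term_le])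

definition X_cert :: "complex \<Rightarrow> nat \<Rightarrow> complex" where
  "X_cert z n = q ^ (n * n) * z ^ n * (1 + q ^ n) / (qpoch (- q) q n * qpoch (- (z * q)) q n)"

lemma X_cert_step:
  assumes "norm z \<le> 1"
  shows "X_cert z n - X_cert z (Suc n) = X_term z n + X_term (z * q) n / (1 + z * q)"
proof -
  define p where "p = q ^ (n * n) * z ^ n"
  define X where "X = q ^ n"
  define P where "P = qpoch (- q) q n"
  define R where "R = qpoch (- (z * q)) q n"
  define T where "T = 1 + z * q * X"
  have R_Suc: "qpoch (- (z * q)) q (Suc n) = R * T"
    by (simp add: qpoch_Suc R_def T_def X_def mult_ac)
  have "R * T \<noteq> 0" "P \<noteq> 0" "1 + q * X \<noteq> 0" "1 + z * q \<noteq> 0"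
    using poch_lb_le_norm_qpoch_zq[OF assms, of "Suc n"] poch_lb_pos one_plus_zq_nonzero[OF assms]
      one_plus_power_q_nonzero[of "Suc n"]
    by (auto simp: R_Suc P_def X_def)
  have "X_cert z (Suc n) = p * X * X * q * z * (1 + q * X) / ((P * R * T) * (1 + q * X))"
  proof -
    have "q ^ (Suc n * Suc n) * z ^ Suc n = p * X * X * q * z"
      by (simp add: p_def X_def power_add mult_ac)
    moreover have "qpoch (- q) q (Suc n) = P * (1 + q * X)"
      by (simp add: qpoch_Suc P_def X_def)
    ultimately show ?thesis
      unfolding X_cert_def R_Suc by (simp add: X_def mult_ac)
  qed
  also have "\<dots> = p * X * X * q * z / (P * R * T)"
    using \<open>1 + q * X \<noteq> 0\<close> by (rule mult_divide_mult_cancel_right)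
  finally have "X_cert z (Suc n) = p * X * X * q * z / (P * R * T)" .
  moreover have "X_term (z * q) n / (1 + z * q) = p * X / (P * R * T)"
  proof -
    have "(1 + z * q) * qpoch (- (z * q * q)) q n = R * T"
      using qpoch_Suc_left[of "- (z * q)" q n] by (simp add: R_Suc)
    then have "qpoch (- (z * q * q)) q n = R * T / (1 + z * q)"
      using \<open>1 + z * q \<noteq> 0\<close> by (simp add: field_simps)
    moreover have "q ^ (n * n) * (z * q) ^ n = p * X"
      by (simp add: p_def X_def power_mult_distrib)
    ultimately show ?thesis
      using \<open>1 + z * q \<noteq> 0\<close> by (simp add: X_term_def P_def)
  qed
  moreover have "X_cert z n = p * (1 + X) / (P * R)" "X_term z n = p / (P * R)"
    by (simp_all add: X_cert_def X_term_def p_def X_def P_def R_def)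
  ultimately show ?thesis
    using \<open>R * T \<noteq> 0\<close> \<open>P \<noteq> 0\<close> by (simp only:) (simp add: field_simps, simp add: T_def algebra_simps)
qed

lemma X_cert_tendsto_0:
  assumes "norm z \<le> 1"
  shows "X_cert z \<longlonglongrightarrow> 0"
proof (rule Lim_null_comparison)
  have "norm (X_cert z n) \<le> norm q ^ n * (2 / (poch_lb * poch_lb))" for n
  proof -
    have "norm (1 + q ^ n) \<le> 2"
      using norm_triangle_ineq[of 1 "q ^ n"] norm_power_q_le_1[of n] by simp
    then have "norm (q ^ (n * n) * z ^ n * (1 + q ^ n)) \<le> norm q ^ n * 1 * 2"
      unfolding norm_mult using norm_power_q_square_le[of n] assms
      by (intro mult_mono) (auto simp: norm_power power_le_one)
    then show ?thesis
      unfolding X_cert_def using poch_lb_le_norm_qpoch_mq poch_lb_le_norm_qpoch_zq[OF assms] poch_lb_pos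
      by (simp add: norm_divide_mult_le_of_lower)
  qed
  then show "\<forall>\<^sub>F n in sequentially. norm (X_cert z n) \<le> norm q ^ n * (2 / (poch_lb * poch_lb))"
    by simp
qed (rule geometric_q_tendsto_0)

lemma X_fun_functional_eq:
  assumes "norm z \<le> 1"
  shows "X_fun z + X_fun (z * q) / (1 + z * q) = 2"
proof -
  have "(\<lambda>n. X_cert z n - X_cert z (Suc n)) sums (X_cert z 0 - 0)"
    by (rule telescope_sums'[OF X_cert_tendsto_0[OF assms]])
  moreover have "X_cert z 0 = 2"
    by (simp add: X_cert_def)
  ultimately have "(\<lambda>n. X_term z n + X_term (z * q) n / (1 + z * q)) sums 2"
    unfolding X_cert_step[OF assms] by simp
  moreover have "(\<lambda>n. X_term z n + X_term (z * q) n / (1 + z * q))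
                   sums (X_fun z + X_fun (z * q) / (1 + z * q))"
    unfolding X_fun_def using assms norm_zq_le_1[OF assms]
    by (intro sums_add sums_divide summable_sums summable_X_term)
  ultimately show ?thesis
    by (rule sums_unique2[symmetric])
qed

lemma Y_fun_functional_eq:
  assumes "norm z \<le> 1"
  shows "Y_fun (z * q) + (1 + z * q) * Y_fun z = 2"
proof -
  define f where "f m = Y_term (z * q) m + Y_term z m" for m
  have "Y_term (z * q) (Suc m) + Y_term z (Suc m) = - (z * q) * Y_term z m" for m
  proof -
    define t where "t = - (z * q)"
    have e: "- (z * q * q) = t * q"
      by (simp add: t_def)
    have P: "qpoch (- q) q (Suc m) = qpoch (- q) q m * (1 + q ^ Suc m)"
      by (simp add: qpoch_Suc)
    have "Y_term (z * q) (Suc m) + Y_term z (Suc m)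
        = (t ^ Suc m * q ^ Suc m + t ^ Suc m) / qpoch (- q) q (Suc m)"
      unfolding Y_term_def e power_mult_distrib t_def[symmetric] by (simp only: add_divide_distrib)
    also have "\<dots> = t ^ Suc m * (1 + q ^ Suc m) / (qpoch (- q) q m * (1 + q ^ Suc m))"
      unfolding P by (simp add: algebra_simps)
    also have "\<dots> = t ^ Suc m / qpoch (- q) q m"
      using one_plus_power_q_nonzero[of "Suc m"] by (rule mult_divide_mult_cancel_right)
    finally show ?thesis
      by (simp add: Y_term_def t_def)
  qed
  then have "(\<lambda>m. f (Suc m)) sums (- (z * q) * Y_fun z)"
    unfolding f_def Y_fun_def
    using sums_mult[OF summable_sums[OF summable_Y_term[OF assms]], of "- (z * q)"] by simp
  then have "f sums (- (z * q) * Y_fun z + f 0)"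
    by (simp only: sums_Suc_iff)
  then have "f sums (- (z * q) * Y_fun z + 2)"
    by (simp add: f_def Y_term_def)
  moreover have "f sums (Y_fun (z * q) + Y_fun z)"
    unfolding f_def Y_fun_def using summable_Y_term[OF assms] summable_Y_term[OF norm_zq_le_1[OF assms]]
    by (intro sums_add summable_sums)
  ultimately show ?thesis
    using sums_unique2 by (fastforce simp: algebra_simps)
qed

lemma X_fun_Y_fun_defect_Suc:
  "X_fun (q ^ Suc k) + Y_fun (q ^ Suc k) - 2 = - (1 + q ^ Suc k) * (X_fun (q ^ k) + Y_fun (q ^ k) - 2)"
proof -
  have "norm (q ^ k) \<le> 1"
    by (rule norm_power_q_le_1)
  note X_eq = X_fun_functional_eq[OF this] and Y_eq = Y_fun_functional_eq[OF this]
  have "1 + q ^ k * q \<noteq> 0"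
    using one_plus_power_q_nonzero[of "Suc k"] by (simp add: mult.commute)
  with X_eq have X': "X_fun (q ^ k * q) = (1 + q ^ k * q) * (2 - X_fun (q ^ k))"
    by (simp add: field_simps)
  from Y_eq have Y': "Y_fun (q ^ k * q) = 2 - (1 + q ^ k * q) * Y_fun (q ^ k)"
    by (simp add: algebra_simps)
  show ?thesis
    unfolding power_Suc2 X' Y' by (simp add: algebra_simps)
qed

lemma norm_X_fun_power_q_minus_1_le:
  "norm (X_fun (q ^ k) - 1) \<le> norm q ^ k / (poch_lb * poch_lb) / (1 - norm q)"
proof -
  have "norm (X_term (q ^ k) (Suc n)) \<le> norm q ^ n * (norm q ^ k / (poch_lb * poch_lb))" for n
  proof -
    have "norm (q ^ (Suc n * Suc n) * (q ^ k) ^ Suc n) \<le> norm q ^ (n + k)"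
      unfolding norm_mult norm_power power_mult[symmetric] power_add[symmetric]
      by (rule norm_power_q_antimono) (simp add: algebra_simps)
    then have "norm (X_term (q ^ k) (Suc n)) \<le> norm q ^ (n + k) / (poch_lb * poch_lb)"
      unfolding X_term_def
      by (intro norm_divide_mult_le_of_lower poch_lb_le_norm_qpoch_mq poch_lb_pos
          poch_lb_le_norm_qpoch_zq norm_power_q_le_1)
    then show ?thesis
      by (simp add: power_add)
  qed
  then have "norm (suminf (X_term (q ^ k)) - X_term (q ^ k) 0)
               \<le> norm q ^ k / (poch_lb * poch_lb) / (1 - norm q)"
    using summable_X_term[OF norm_power_q_le_1] norm_q_less_1
    by (intro norm_suminf_minus_head_le) auto
  then show ?thesis
    by (simp add: X_fun_def X_term_def)
qed

lemma norm_Y_fun_power_q_minus_1_le: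
  "norm (Y_fun (q ^ k) - 1) \<le> norm q ^ k / poch_lb / (1 - norm q)"
proof -
  have "norm (Y_term (q ^ k) (Suc n)) \<le> norm q ^ n * (norm q ^ k / poch_lb)" for n
  proof -
    have "norm ((- (q ^ k * q)) ^ Suc n) \<le> norm q ^ (n + k)"
      unfolding norm_minus_cancel norm_mult norm_power power_Suc2[symmetric] power_mult[symmetric]
      by (rule norm_power_q_antimono) (simp add: algebra_simps)
    then have "norm (Y_term (q ^ k) (Suc n)) \<le> norm q ^ (n + k) / poch_lb"
      unfolding Y_term_def by (intro norm_divide_le_of_lower poch_lb_le_norm_qpoch_mq poch_lb_pos)
    then show ?thesis
      by (simp add: power_add)
  qed
  then have "norm (suminf (Y_term (q ^ k)) - Y_term (q ^ k) 0) \<le> norm q ^ k / poch_lb / (1 - norm q)"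
    using summable_Y_term[OF norm_power_q_le_1] norm_q_less_1
    by (intro norm_suminf_minus_head_le) auto
  then show ?thesis
    by (simp add: Y_fun_def Y_term_def)
qed

lemma X_fun_one_plus_Y_fun_one: "X_fun 1 + Y_fun 1 = 2"
proof -
  define d where "d k = X_fun (q ^ k) + Y_fun (q ^ k) - 2" for k
  define K where "K = 1 / (poch_lb * poch_lb) / (1 - norm q) + 1 / poch_lb / (1 - norm q)"
  have d_eq: "d k = (-1) ^ k * qpoch (- q) q k * d 0" for k
  proof (induction k)
    case (Suc k)
    have "d (Suc k) = - (1 + q ^ Suc k) * d k"
      unfolding d_def by (rule X_fun_Y_fun_defect_Suc)
    then show ?case
      using Suc.IH by (simp add: qpoch_Suc algebra_simps)
  qed simp
  have bound: "poch_lb * norm (d 0) \<le> norm q ^ k * K" for k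
  proof -
    have "poch_lb * norm (d 0) \<le> norm (qpoch (- q) q k) * norm (d 0)"
      using poch_lb_le_norm_qpoch_mq[of k] by (intro mult_right_mono) auto
    also have "\<dots> = norm ((X_fun (q ^ k) - 1) + (Y_fun (q ^ k) - 1))"
      using d_eq[of k] by (simp add: d_def norm_mult norm_power)
    also have "\<dots> \<le> norm q ^ k * K"
      using norm_triangle_ineq[of "X_fun (q ^ k) - 1" "Y_fun (q ^ k) - 1"]
        norm_X_fun_power_q_minus_1_le[of k] norm_Y_fun_power_q_minus_1_le[of k]
      by (simp add: K_def distrib_left)
    finally show ?thesis .
  qed
  have "poch_lb * norm (d 0) \<le> 0"
    by (rule LIMSEQ_le_const[OF geometric_q_tendsto_0[of K]]) (use bound in auto)
  then show ?thesis
    using poch_lb_pos by (simp add: d_def mult_le_0_iff)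
qed

section \<open>The limiting Bailey lemma\<close>

lemma summable_odd_mult_power_q_square: "summable (\<lambda>n. real (2 * n + 1) * norm q ^ (n * n))"
proof -
  obtain K where K: "\<And>n. real n * norm q ^ n \<le> K"
    using of_nat_mult_power_bounded[of "norm q"] norm_q_less_1 by auto
  have bound: "real (2 * n + 1) * norm q ^ (n * n) \<le> norm q ^ n * ((2 * K + 1) / norm q)" for n
  proof -
    have "norm q ^ (n * n + 1) \<le> norm q ^ (n + n)"
      by (rule norm_power_q_antimono) (cases n; simp)
    then have "norm q ^ (n * n) * norm q \<le> norm q ^ n * norm q ^ n"
      by (simp only: power_add power_one_right)
    then have "real (2 * n + 1) * norm q ^ (n * n) * norm q \<le> real (2 * n + 1) * (norm q ^ n * norm q ^ n)"
      unfolding mult.assoc by (rule mult_left_mono) simp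
    also have "\<dots> = (2 * (real n * norm q ^ n) + norm q ^ n) * norm q ^ n"
      by (simp add: algebra_simps)
    also have "\<dots> \<le> (2 * K + 1) * norm q ^ n"
      using K[of n] norm_power_q_le_1[of n] by (intro mult_right_mono) (auto simp: norm_power)
    finally show ?thesis
      using q_nonzero by (simp add: field_simps)
  qed
  show ?thesis
    by (rule summable_comparison_test'[OF summable_geometric_q[of "(2 * K + 1) / norm q"]])
      (use bound in \<open>simp add: abs_mult\<close>)
qed

definition bailey_term :: "(int \<Rightarrow> complex) \<Rightarrow> nat \<Rightarrow> int \<Rightarrow> complex" where
  "bailey_term \<alpha> n r = q ^ (n * n) * \<alpha> r * inv_qfac (int n - r) * inv_qfac (int n + r)"

lemma bailey_term_eq_0: "r \<notin> {-int n..int n} \<Longrightarrow> bailey_term \<alpha> n r = 0"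
  by (auto simp: bailey_term_def inv_qfac_def)

lemma infsum_bailey_term_row: "(\<Sum>\<^sub>\<infinity>r. bailey_term \<alpha> n r) = q ^ (n * n) * bailey_sum \<alpha> n"
proof -
  have "(\<Sum>\<^sub>\<infinity>r. bailey_term \<alpha> n r) = (\<Sum>r\<in>{-int n..int n}. bailey_term \<alpha> n r)"
    by (subst infsum_cong_neutral[where T = "{-int n..int n}"]) (auto simp: bailey_term_eq_0)
  then show ?thesis
    by (simp add: bailey_term_def bailey_sum_def sum_distrib_left mult.assoc)
qed

lemma norm_bailey_term_le:
  assumes "\<And>r. norm (\<alpha> r) \<le> M"
  shows "norm (bailey_term \<alpha> n r) \<le> norm q ^ (n * n) * (M / (poch_lb * poch_lb))"
proof -
  have "norm (bailey_term \<alpha> n r)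
          = norm q ^ (n * n) * norm (\<alpha> r) * norm (inv_qfac (int n - r)) * norm (inv_qfac (int n + r))"
    by (simp add: bailey_term_def norm_mult norm_power)
  also have "\<dots> \<le> norm q ^ (n * n) * M * (1 / poch_lb) * (1 / poch_lb)"
    using assms[of r] poch_lb_pos
    by (intro mult_mono mult_nonneg_nonneg norm_inv_qfac_le) (auto intro: order.trans[OF _ assms])
  finally show ?thesis
    by simp
qed

lemma infsum_norm_bailey_term_le:
  assumes "\<And>r. norm (\<alpha> r) \<le> M"
  shows "(\<Sum>\<^sub>\<infinity>r. norm (bailey_term \<alpha> n r)) \<le> real (2 * n + 1) * norm q ^ (n * n) * (M / (poch_lb * poch_lb))"
proof -
  have "(\<Sum>\<^sub>\<infinity>r. norm (bailey_term \<alpha> n r)) = (\<Sum>r\<in>{-int n..int n}. norm (bailey_term \<alpha> n r))"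
    by (subst infsum_cong_neutral[where T = "{-int n..int n}"]) (auto simp: bailey_term_eq_0)
  also have "\<dots> \<le> of_nat (card {-int n..int n}) * (norm q ^ (n * n) * (M / (poch_lb * poch_lb)))"
    using norm_bailey_term_le[OF assms] by (intro sum_bounded_above)
  also have "card {-int n..int n} = 2 * n + 1"
    by simp
  finally show ?thesis
    by (simp add: mult.assoc)
qed

lemma summable_on_bailey_term:
  assumes "\<And>r. norm (\<alpha> r) \<le> M"
  shows "(\<lambda>(n, r). bailey_term \<alpha> n r) summable_on UNIV \<times> UNIV"
proof -
  have row: "(\<lambda>r. norm (bailey_term \<alpha> n r)) summable_on UNIV" for n
  proof (rule finite_nonzero_values_imp_summable_on)
    have "{r \<in> UNIV. norm (bailey_term \<alpha> n r) \<noteq> 0} \<subseteq> {-int n..int n}"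
      using bailey_term_eq_0 by fastforce
    then show "finite {r \<in> UNIV. norm (bailey_term \<alpha> n r) \<noteq> 0}"
      by (rule finite_subset) simp
  qed
  have "summable (\<lambda>n. norm (\<Sum>\<^sub>\<infinity>r. norm (bailey_term \<alpha> n r)))"
    using infsum_norm_bailey_term_le[of \<alpha> M, OF assms]
      infsum_nonneg[of UNIV "\<lambda>r. norm (bailey_term \<alpha> n r)" for n]
    by (intro summable_comparison_test'[OF summable_mult2[OF summable_odd_mult_power_q_square,
          of "M / (poch_lb * poch_lb)"]]) auto
  then have "(\<lambda>n. norm (\<Sum>\<^sub>\<infinity>r. norm (bailey_term \<alpha> n r))) summable_on UNIV"
    by (intro norm_summable_imp_summable_on) simp
  then have "(\<lambda>x. norm ((\<lambda>(n, r). bailey_term \<alpha> n r) x)) summable_on UNIV \<times> UNIV"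
    using row Infinite_Sum.abs_summable_on_Sigma_iff[where f = "\<lambda>(n, r). bailey_term \<alpha> n r"
        and A = UNIV and B = "\<lambda>_. UNIV"]
    by simp
  then show ?thesis
    by (simp add: summable_on_iff_abs_summable_on_complex)
qed

lemma infsum_bailey_term_column:
  "(\<Sum>\<^sub>\<infinity>n. bailey_term \<alpha> n r) = q powi (r * r) * \<alpha> r / qpoch_inf q q"
proof -
  define m where "m = nat \<bar>r\<bar>"
  define g where "g n = q ^ (n * n) * inv_qfac (int n - r) * inv_qfac (int n + r)" for n
  have "g n = 0" if "n < m" for n
    using that by (auto simp: g_def m_def inv_qfac_def)
  moreover have "g (k + m) = q ^ (m * m) * durfee_term (2 * m) k" for k
  proof -
    have "inv_qfac (int (k + m) - r) * inv_qfac (int (k + m) + r)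
            = inverse (qpoch q q k) * inverse (qpoch q q (k + 2 * m))"
      by (cases "0 \<le> r") (simp_all add: m_def inv_qfac_of_nat[symmetric] algebra_simps)
    moreover have "(k + m) * (k + m) = m * m + (k * k + 2 * m * k)"
      by (simp add: algebra_simps)
    ultimately show ?thesis
      by (simp add: g_def durfee_term_def power_add divide_inverse mult_ac)
  qed
  ultimately have "g sums (q ^ (m * m) * inverse (qpoch_inf q q))"
    using sums_mult[OF durfee_term_sums[of "2 * m"], of "q ^ (m * m)"]
    by (subst sums_zero_iff_shift[of m, symmetric]) auto
  moreover have "summable (\<lambda>n. norm (g n))"
  proof (rule summable_norm_comparison_test[OF _ summable_geometric_q])
    have "norm (g n) \<le> norm q ^ n * (1 / poch_lb) * (1 / poch_lb)" for n
      unfolding g_def norm_mult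
      using norm_power_q_square_le norm_inv_qfac_le poch_lb_pos by (intro mult_mono) auto
    then show "\<exists>N. \<forall>n\<ge>N. norm (g n) \<le> norm q ^ n * (1 / poch_lb * (1 / poch_lb))"
      by (simp add: mult.assoc)
  qed
  ultimately have "(\<Sum>\<^sub>\<infinity>n. g n) = q ^ (m * m) * inverse (qpoch_inf q q)"
    by (intro infsumI norm_summable_imp_has_sum)
  moreover have "r * r = int (m * m)"
    by (simp add: m_def abs_mult_self_eq flip: abs_mult)
  then have "q ^ (m * m) = q powi (r * r)"
    by (simp only: power_int_of_nat)
  ultimately show ?thesis
    by (simp add: bailey_term_def g_def infsum_cmult_right' divide_inverse mult_ac)
qed

text \<open>The limiting case of Bailey's lemma in which both of its parameters tend to infinity.\<close>
lemma infsum_bailey_lemma: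
  assumes "\<And>r. norm (\<alpha> r) \<le> M"
  shows "(\<Sum>\<^sub>\<infinity>n. q ^ (n * n) * bailey_sum \<alpha> n) = (\<Sum>\<^sub>\<infinity>r. q powi (r * r) * \<alpha> r) / qpoch_inf q q"
proof -
  have "(\<Sum>\<^sub>\<infinity>n. q ^ (n * n) * bailey_sum \<alpha> n) = (\<Sum>\<^sub>\<infinity>n. \<Sum>\<^sub>\<infinity>r. bailey_term \<alpha> n r)"
    by (simp add: infsum_bailey_term_row)
  also have "\<dots> = (\<Sum>\<^sub>\<infinity>r. \<Sum>\<^sub>\<infinity>n. bailey_term \<alpha> n r)"
    by (rule infsum_swap_banach[OF summable_on_bailey_term[OF assms]])
  also have "\<dots> = (\<Sum>\<^sub>\<infinity>r. q powi (r * r) * \<alpha> r) / qpoch_inf q q"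
    by (simp add: infsum_bailey_term_column divide_inverse infsum_cmult_left')
  finally show ?thesis .
qed

section \<open>Evaluation of \<open>X(1)\<close>\<close>

lemma power_q_square_mult_bailey_sum_alpha_pent:
  "q ^ (n * n) * bailey_sum alpha_pent n = (if n = 0 then 1 else 0) - X_term 1 n / 2"
proof -
  have "X_term 1 n = q ^ (n * n) * inverse ((qpoch (- q) q n)\<^sup>2)"
    by (simp add: X_term_def power2_eq_square divide_inverse)
  then show ?thesis
    by (cases "n = 0") (simp_all add: bailey_sum_alpha_pent)
qed

lemma has_sum_one_minus_half_X_term_one:
  "((\<lambda>n. (if n = 0 then 1 else 0) - X_term 1 n / 2) has_sum (1 - X_fun 1 / 2)) UNIV"
proof (rule norm_summable_imp_has_sum)
  have bound: "norm ((if n = 0 then 1 else 0) - X_term 1 n / 2) \<le> (if n = 0 then 1 else 0) + norm (X_term 1 n) / 2"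
    for n
    using norm_triangle_ineq4[of "if n = 0 then 1 else 0 :: complex" "X_term 1 n / 2"]
    by (cases "n = 0") (simp_all add: norm_divide)
  have "summable (\<lambda>n. (if n = 0 then 1 else 0) + norm (X_term 1 n) / 2)"
    using summable_norm_X_term[of 1] by (intro summable_add summable_divide) simp_all
  then show "summable (\<lambda>n. norm ((if n = 0 then 1 else 0) - X_term 1 n / 2))"
    by (rule summable_comparison_test') (use bound in simp)
  have "(\<lambda>n. if n = 0 then 1 else 0 :: complex) sums 1"
    using sums_single[of 0 "\<lambda>_. 1 :: complex"] by simp
  then show "(\<lambda>n. (if n = 0 then 1 else 0) - X_term 1 n / 2) sums (1 - X_fun 1 / 2)"
    unfolding X_fun_def by (intro sums_diff sums_divide summable_sums summable_X_term) auto
qed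

lemma power_int_q_square_mult_alpha_pent:
  "q powi (r * r) * alpha_pent r = (-1) powi r * q powi (3 * r * (r + 1) div 2) / (1 + q powi r)"
proof -
  have "q powi (3 * r * (r + 1) div 2) = q powi (choose2 r + 2 * r) * q powi (r * r)"
    unfolding pentagonal_exponent by (rule power_int_q_add)
  then show ?thesis
    by (simp add: alpha_pent_eq mult_ac)
qed

lemma one_minus_half_X_fun_one:
  "1 - X_fun 1 / 2
     = (\<Sum>\<^sub>\<infinity>r. (-1) powi r * q powi (3 * r * (r + 1) div 2) / (1 + q powi r)) / qpoch_inf q q"
proof -
  have "(\<Sum>\<^sub>\<infinity>n. q ^ (n * n) * bailey_sum alpha_pent n) = (\<Sum>\<^sub>\<infinity>r. q powi (r * r) * alpha_pent r) / qpoch_inf q q"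
    using norm_alpha_pent_le by (rule infsum_bailey_lemma)
  then show ?thesis
    unfolding power_q_square_mult_bailey_sum_alpha_pent power_int_q_square_mult_alpha_pent
    using infsumI[OF has_sum_one_minus_half_X_term_one] by simp
qed

section \<open>The generating function\<close>

lemma qpoch_mq_Suc_telescope:
  "inverse (qpoch (- q) q m) - inverse (qpoch (- q) q (Suc m)) = q ^ Suc m / qpoch (- q) q (Suc m)"
proof -
  define P where "P = qpoch (- q) q m"
  define t where "t = 1 + q ^ Suc m"
  have "qpoch (- q) q (Suc m) = P * t"
    by (simp add: P_def t_def qpoch_Suc)
  moreover have "P \<noteq> 0" "t \<noteq> 0"
    using one_plus_power_q_nonzero[of "Suc m"] by (simp_all add: P_def t_def)
  ultimately show ?thesis
    by (simp add: P_def[symmetric] field_simps, simp add: t_def algebra_simps)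
qed

lemma sums_power_q_div_qpoch_mq: "(\<lambda>m. q ^ m / qpoch (- q) q m) sums (2 - 1 / qpoch_inf (- q) q)"
proof -
  have "(\<lambda>m. inverse (qpoch (- q) q m)) \<longlonglongrightarrow> inverse (qpoch_inf (- q) q)"
    using qpoch_tendsto_qpoch_inf[OF norm_q_less_1] qpoch_inf_mq_nonzero by (rule tendsto_inverse)
  then have "(\<lambda>m. q ^ Suc m / qpoch (- q) q (Suc m)) sums (1 - inverse (qpoch_inf (- q) q))"
    using telescope_sums'[of "\<lambda>m. inverse (qpoch (- q) q m)"] by (simp add: qpoch_mq_Suc_telescope)
  then show ?thesis
    using sums_Suc_iff[of "\<lambda>m. q ^ m / qpoch (- q) q m"] by (simp add: divide_inverse)
qed

lemma sums_odd_power_q_div_qpoch_mq: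
  "(\<lambda>n. q ^ (2 * n + 1) / qpoch (- q) q (2 * n + 1)) sums ((2 - 1 / qpoch_inf (- q) q - Y_fun 1) / 2)"
proof -
  define f where "f m = (q ^ m / qpoch (- q) q m - Y_term 1 m) / 2" for m
  have "f sums ((2 - 1 / qpoch_inf (- q) q - Y_fun 1) / 2)"
    unfolding f_def Y_fun_def
    by (intro sums_divide sums_diff sums_power_q_div_qpoch_mq summable_sums summable_Y_term) simp
  moreover have "f m = 0" if "m \<notin> range (\<lambda>n. 2 * n + 1)" for m
  proof -
    have "even m"
      using that by (metis oddE rangeI)
    then show ?thesis
      by (simp add: f_def Y_term_def)
  qed
  ultimately have "(\<lambda>n. f (2 * n + 1)) sums ((2 - 1 / qpoch_inf (- q) q - Y_fun 1) / 2)"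
    using sums_mono_reindex[of "\<lambda>n. 2 * n + 1" f] by (simp add: strict_mono_def)
  then show ?thesis
    by (simp add: f_def Y_term_def field_simps)
qed

lemma F_ed_ou_minus_eq:
  "F_ed_ou (- q) = - qpoch_inf (- (q\<^sup>2)) (q\<^sup>2) * ((2 - 1 / qpoch_inf (- q) q - Y_fun 1) / 2)"
proof -
  define A where "A = qpoch_inf (- (q\<^sup>2)) (q\<^sup>2)"
  have F_term: "(- q) ^ (2 * n + 1) * qpoch_inf (- ((- q) ^ (2 * n + 2))) ((- q)\<^sup>2) / qpoch (- q) ((- q)\<^sup>2) (n + 1)
                = - A * (q ^ (2 * n + 1) / qpoch (- q) q (2 * n + 1))" for n
  proof -
    have pow: "q ^ (2 * j + 2) = q\<^sup>2 * (q\<^sup>2) ^ j" for j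
      by (simp only: power_add power_mult) (rule mult.commute)
    have "norm (q\<^sup>2) < 1"
      using norm_power_q_less_1[of 2] by (simp add: norm_power)
    moreover have "- (q\<^sup>2) * (q\<^sup>2) ^ j \<noteq> 1" for j
      using power_q_ne_minus_1[of "2 * j + 2"] unfolding pow by (auto simp: minus_equation_iff)
    ultimately have "A = qpoch (- (q\<^sup>2)) (q\<^sup>2) n * qpoch_inf (- (q\<^sup>2) * (q\<^sup>2) ^ n) (q\<^sup>2)"
      unfolding A_def by (rule qpoch_inf_eq_qpoch_mult_tail)
    then have "A = qpoch (- (q\<^sup>2)) (q\<^sup>2) n * qpoch_inf (- (q ^ (2 * n + 2))) (q\<^sup>2)"
      by (simp only: pow mult_minus_left)
    moreover have "qpoch (- q) q (2 * n + 1) = qpoch (- (q\<^sup>2)) (q\<^sup>2) n * qpoch (- q) (q\<^sup>2) (n + 1)"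
      using qpoch_odd_split[of "- q" q n] by (simp add: power2_eq_square)
    moreover have "qpoch (- q) q (2 * n + 1) \<noteq> 0"
      by simp
    moreover have "(- q) ^ (2 * n + 1) = - (q ^ (2 * n + 1))" "(- q) ^ (2 * n + 2) = q ^ (2 * n + 2)"
      by (simp_all add: power_minus_odd power_minus_even)
    ultimately show ?thesis
      by (simp add: field_simps)
  qed
  have "F_ed_ou (- q) = (\<Sum>n. - A * (q ^ (2 * n + 1) / qpoch (- q) q (2 * n + 1)))"
    unfolding F_ed_ou_def F_term ..
  also have "\<dots> = - A * ((2 - 1 / qpoch_inf (- q) q - Y_fun 1) / 2)"
    using sums_mult[OF sums_odd_power_q_div_qpoch_mq, of "- A"] by (simp add: sums_iff)
  finally show ?thesis
    unfolding A_def .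
qed

end

theorem theorem1p1:
  fixes q :: complex
  assumes "norm q < 1" and "q \<noteq> 0"
  shows "F_ed_ou (- q) =
    - (qpoch_inf (- (q^2)) (q^2) / 2) *
      (2 - 1 / qpoch_inf (- q) q
         - (2 / qpoch_inf q q) *
           (\<Sum>\<^sub>\<infinity>n\<in>(UNIV::int set).
              (-1) powi n * q powi ((3 * n * (n + 1)) div 2) / (1 + q powi n)))"
proof -
  interpret qseries q
    using assms by unfold_locales
  define S where "S = (\<Sum>\<^sub>\<infinity>n\<in>(UNIV::int set).
              (-1) powi n * q powi ((3 * n * (n + 1)) div 2) / (1 + q powi n))"
  have "X_fun 1 = 2 - 2 * (1 - X_fun 1 / 2)"
    by simp
  also have "\<dots> = 2 - 2 * (S / qpoch_inf q q)"
    unfolding S_def one_minus_half_X_fun_one ..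
  finally have "Y_fun 1 = 2 * (S / qpoch_inf q q)"
    using X_fun_one_plus_Y_fun_one by (simp add: algebra_simps) (metis add_left_cancel)
  then show ?thesis
    unfolding F_ed_ou_minus_eq S_def[symmetric] by (simp add: field_simps)
qed

end
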